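(* Let $F:\mathbb R^n\to\mathbb R^n$ be monotone with $\|F(z)-F(z')\|\le\ell\|z-z'\|$ and $\|\partial F(z)-\partial F(z')\|_\sigma\le\Lambda\|z-z'\|$ for all $z,z'$. Let $\eta>0$, let $z^{(-1)},z^{(0)}\in\mathbb R^n$, let $z^{(t+1)}=z^{(t)}-2\eta F(z^{(t)})+\eta F(z^{(t-1)})$ for $t\ge0$, and set $w^{(t)}:=z^{(t)}+\eta F(z^{(t-1)})$, $$A^{(t)}:=\int_0^1\partial F\big(w^{(t)}-(1-\alpha)\eta F(z^{(t)})\big)\,d\alpha,\qquad B^{(t)}:=\int_0^1\partial F\big(w^{(t)}-(1-\alpha)\eta F(z^{(t-1)})\big)\,d\alpha.$$ Then for each $t\ge0$: $A^{(t)}+(A^{(t)})^\top$ and $B^{(t)}+(B^{(t)})^\top$ are positive semidefinite; $\|A^{(t)}\|_\sigma\le\ell$, $\|B^{(t)}\|_\sigma\le\ell$; and $$\|A^{(t)}-B^{(t)}\|_\sigma\le\tfrac{\eta\Lambda}{2}\|F(z^{(t)})-F(z^{(t-1)})\|,$$ $$\|A^{(t)}-A^{(t+1)}\|_\sigma\le\Lambda\|w^{(t)}-w^{(t+1)}\|+\tfrac{\eta\Lambda}{2}\|F(z^{(t)})-F(z^{(t+1)})\|,$$ $$\|B^{(t)}-B^{(t+1)}\|_\sigma\le\Lambda\|w^{(t)}-w^{(t+1)}\|+\tfrac{\eta\Lambda}{2}\|F(z^{(t-1)})-F(z^{(t)})\|.$$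
   Context: $F$ monotone means $\langle F(z')-F(z),z'-z\rangle\ge0$ for all $z,z'$. $\partial F$ denotes the Jacobian of $F$, $\|\cdot\|_\sigma$ the spectral norm; integrals of matrices are entrywise. *)

theory Defs
  imports "HOL-Analysis.Analysis"
begin

definition spec_norm :: "real^'n^'m \<Rightarrow> real" where
  "spec_norm A = onorm (\<lambda>x. A *v x)"

definition psd :: "real^'n^'n \<Rightarrow> bool" where
  "psd M \<longleftrightarrow> (\<forall>x. 0 \<le> x \<bullet> (M *v x))"

definition mat_integral01 :: "(real \<Rightarrow> real^'n^'m) \<Rightarrow> real^'n^'m" where
  "mat_integral01 f = (\<chi> i j. integral {0..1} (\<lambda>a. f a $ i $ j))"

end

theory Submission
  imports Defs
begin

text \<open>Both \<open>A t\<close> and \<open>B t\<close> average the Jacobian \<open>J\<close> over a segment ending at \<open>w t\<close>.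
  Computing \<open>J u\<close> from difference quotients, monotonicity of \<open>F\<close> makes \<open>J u + (J u)\<^sup>T\<close>
  positive semidefinite, and the Lipschitz bound on \<open>F\<close> gives \<open>spec_norm (J u) \<le> ell\<close>; both
  properties survive averaging. For two averages along segments ending at \<open>p\<close>, \<open>p'\<close> with
  directions \<open>q\<close>, \<open>q'\<close>, the Lipschitz bound on \<open>J\<close> separates the integrands at parameter
  \<open>\<alpha>\<close> by at most \<open>Lam * (norm (p - p') + (1 - \<alpha>) * \<eta> * norm (q - q'))\<close>, which integrates
  to \<open>Lam * norm (p - p') + \<eta> * Lam / 2 * norm (q - q')\<close>.\<close>

lemma bounded_linear_mult_vec_left: "bounded_linear (\<lambda>M::real^'n^'m. M *v x)"
proof -
  have "linear (\<lambda>M::real^'n^'m. M *v x)"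
    by (rule linearI) (simp_all add: matrix_vector_mult_add_rdistrib scaleR_matrix_vector_assoc)
  then show ?thesis by (rule linear_conv_bounded_linear[THEN iffD1])
qed

lemma norm_mult_vec_le_spec_norm: "norm ((M::real^'n^'m) *v x) \<le> spec_norm M * norm x"
  unfolding spec_norm_def by (rule onorm) (rule matrix_vector_mul_bounded_linear)

lemma abs_entry_le_spec_norm: "\<bar>(M::real^'n^'m) $ i $ j\<bar> \<le> spec_norm M"
  unfolding spec_norm_def by (rule matrix_component_le_onorm)

lemma spec_norm_nonneg: "0 \<le> spec_norm (M::real^'n^'m)"
  unfolding spec_norm_def by (rule onorm_pos_le) (rule matrix_vector_mul_bounded_linear)

lemma psd_add_transpose_iff: "psd (M + transpose M) \<longleftrightarrow> (\<forall>x. 0 \<le> x \<bullet> (M *v x))"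
proof -
  have "x \<bullet> (transpose M *v x) = x \<bullet> (M *v x)" for x
    by (metis dot_lmul_matrix inner_commute transpose_matrix_vector)
  then show ?thesis
    by (simp add: psd_def matrix_vector_mult_add_rdistrib inner_add_right)
qed

lemma spec_norm_lipschitz_const_nonneg:
  fixes J :: "'a::euclidean_space \<Rightarrow> real^'n^'m"
  assumes "\<And>x y. spec_norm (J x - J y) \<le> L * norm (x - y)"
  shows "0 \<le> L"
proof -
  obtain b :: 'a where "b \<in> Basis" using nonempty_Basis by blast
  then have "norm b = 1" by simp
  then show ?thesis using spec_norm_nonneg[of "J b - J 0"] assms[of b 0] by simp
qed

lemma continuous_on_if_spec_norm_lipschitz:
  fixes J :: "'a::real_normed_vector \<Rightarrow> real^'n^'m"
  assumes lip: "\<And>x y. spec_norm (J x - J y) \<le> L * norm (x - y)"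
  shows "continuous_on UNIV J"
proof (intro continuous_at_imp_continuous_on ballI)
  fix x
  have entry: "((\<lambda>y. J y $ i $ j) \<longlongrightarrow> J x $ i $ j) (at x)" for i j
  proof -
    have bound: "\<forall>y. norm (J y $ i $ j - J x $ i $ j) \<le> L * norm (y - x)"
      using abs_entry_le_spec_norm lip by (metis order_trans vector_minus_component real_norm_def)
    have "((\<lambda>y. L * norm (y - x)) \<longlongrightarrow> 0) (at x)"
      by (intro tendsto_mult_right_zero tendsto_norm_zero LIM_zero tendsto_ident_at)
    with always_eventually[OF bound]
    have "((\<lambda>y. J y $ i $ j - J x $ i $ j) \<longlongrightarrow> 0) (at x)"
      by (rule Lim_null_comparison)
    then show ?thesis
      by (rule LIM_zero_cancel)
  qed
  have "((\<lambda>y. \<chi> i j. J y $ i $ j) \<longlongrightarrow> (\<chi> i j. J x $ i $ j)) (at x)"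
    by (intro tendsto_vec_lambda entry)
  then show "isCont J x"
    by (simp add: isCont_def)
qed

lemma directional_difference_quotient_tendsto:
  fixes F :: "'a::real_normed_vector \<Rightarrow> 'b::real_normed_vector"
  assumes "(F has_derivative F') (at p)"
  shows "((\<lambda>s. (F (p + s *\<^sub>R h) - F p) /\<^sub>R s) \<longlongrightarrow> F' h) (at 0)"
proof -
  have "((\<lambda>s. p + s *\<^sub>R h) has_derivative (\<lambda>s. s *\<^sub>R h)) (at 0)"
    by (auto intro!: derivative_eq_intros)
  moreover have "(F has_derivative F') (at ((\<lambda>s. p + s *\<^sub>R h) 0))"
    using assms by simp
  ultimately have "((F \<circ> (\<lambda>s. p + s *\<^sub>R h)) has_derivative (F' \<circ> (\<lambda>s. s *\<^sub>R h))) (at 0)"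
    by (rule diff_chain_at)
  moreover have "F' \<circ> (\<lambda>s. s *\<^sub>R h) = (\<lambda>s. s *\<^sub>R F' h)"
    using linear_cmul[OF has_derivative_linear[OF assms]] by (simp add: o_def)
  ultimately have "((\<lambda>s. F (p + s *\<^sub>R h)) has_derivative (\<lambda>s. s *\<^sub>R F' h)) (at 0)"
    by (simp add: o_def)
  then have "((\<lambda>s. norm (F (p + s *\<^sub>R h) - F p - s *\<^sub>R F' h) / norm s) \<longlongrightarrow> 0) (at 0)"
    by (simp add: has_derivative_at)
  moreover have "\<forall>\<^sub>F s in at 0. norm (F (p + s *\<^sub>R h) - F p - s *\<^sub>R F' h) / norm s
      = norm ((F (p + s *\<^sub>R h) - F p) /\<^sub>R s - F' h)"
    unfolding eventually_at_filter
  proof (intro always_eventually allI impI)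
    fix s :: real assume "s \<noteq> 0"
    have "F (p + s *\<^sub>R h) - F p - s *\<^sub>R F' h = s *\<^sub>R ((F (p + s *\<^sub>R h) - F p) /\<^sub>R s - F' h)"
      using \<open>s \<noteq> 0\<close> by (simp add: algebra_simps)
    then show "norm (F (p + s *\<^sub>R h) - F p - s *\<^sub>R F' h) / norm s
      = norm ((F (p + s *\<^sub>R h) - F p) /\<^sub>R s - F' h)" using \<open>s \<noteq> 0\<close> by simp
  qed
  ultimately have "((\<lambda>s. norm ((F (p + s *\<^sub>R h) - F p) /\<^sub>R s - F' h)) \<longlongrightarrow> 0) (at 0)"
    by (rule Lim_transform_eventually)
  then show ?thesis by (simp add: tendsto_norm_zero_iff LIM_zero_iff)
qed

lemma monotone_derivative_nonneg:
  fixes F :: "'a::real_inner \<Rightarrow> 'a"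
  assumes "(F has_derivative F') (at p)" and mono: "\<And>x y. 0 \<le> (F y - F x) \<bullet> (y - x)"
  shows "0 \<le> F' h \<bullet> h"
proof (rule tendsto_lowerbound)
  show "((\<lambda>s. ((F (p + s *\<^sub>R h) - F p) /\<^sub>R s) \<bullet> h) \<longlongrightarrow> F' h \<bullet> h) (at_right 0)"
    using tendsto_mono[OF at_le directional_difference_quotient_tendsto[OF assms(1)]]
    by (intro tendsto_inner tendsto_const) auto
  have quotient_nonneg: "0 \<le> ((F (p + s *\<^sub>R h) - F p) /\<^sub>R s) \<bullet> h" if "0 < s" for s :: real
  proof -
    have "0 \<le> s * ((F (p + s *\<^sub>R h) - F p) \<bullet> h)"
      using mono[of p "p + s *\<^sub>R h"] by (simp add: inner_diff_left algebra_simps)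
    then show ?thesis using that by (simp add: zero_le_mult_iff)
  qed
  show "\<forall>\<^sub>F s in at_right 0. 0 \<le> ((F (p + s *\<^sub>R h) - F p) /\<^sub>R s) \<bullet> h"
    using eventually_at_right_less by (rule eventually_mono) (rule quotient_nonneg)
qed simp

lemma lipschitz_derivative_norm_le:
  fixes F :: "'a::real_normed_vector \<Rightarrow> 'b::real_normed_vector"
  assumes "(F has_derivative F') (at p)" and lip: "\<And>x y. norm (F x - F y) \<le> L * norm (x - y)"
  shows "norm (F' h) \<le> L * norm h"
proof (rule tendsto_upperbound)
  show "((\<lambda>s. norm ((F (p + s *\<^sub>R h) - F p) /\<^sub>R s)) \<longlongrightarrow> norm (F' h)) (at_right 0)"
    using tendsto_mono[OF at_le directional_difference_quotient_tendsto[OF assms(1)]]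
    by (intro tendsto_norm) auto
  have quotient_bounded: "norm ((F (p + s *\<^sub>R h) - F p) /\<^sub>R s) \<le> L * norm h" if "0 < s" for s :: real
  proof -
    have "norm ((F (p + s *\<^sub>R h) - F p) /\<^sub>R s) = inverse s * norm (F (p + s *\<^sub>R h) - F p)"
      using that by (simp only: norm_scaleR abs_inverse abs_of_pos)
    also have "\<dots> \<le> inverse s * (L * norm h * s)"
      using lip[of "p + s *\<^sub>R h" p] that by (intro mult_left_mono) (simp_all add: mult_ac)
    also have "\<dots> = L * norm h"
      using that by simp
    finally show ?thesis .
  qed
  show "\<forall>\<^sub>F s in at_right 0. norm ((F (p + s *\<^sub>R h) - F p) /\<^sub>R s) \<le> L * norm h"
    using eventually_at_right_less by (rule eventually_mono) (rule quotient_bounded)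
qed simp

lemma monotone_jacobian_quadratic_form_nonneg:
  fixes F :: "real^'n \<Rightarrow> real^'n"
  assumes "(F has_derivative (\<lambda>h. M *v h)) (at p)" and "\<And>x y. 0 \<le> (F y - F x) \<bullet> (y - x)"
  shows "0 \<le> x \<bullet> (M *v x)"
  using monotone_derivative_nonneg[OF assms] by (simp add: inner_commute)

lemma spec_norm_jacobian_le_lipschitz:
  fixes F :: "real^'n \<Rightarrow> real^'m"
  assumes "(F has_derivative (\<lambda>h. M *v h)) (at p)" and "\<And>x y. norm (F x - F y) \<le> L * norm (x - y)"
  shows "spec_norm M \<le> L"
  unfolding spec_norm_def by (rule onorm_le) (rule lipschitz_derivative_norm_le[OF assms])

lemma mat_integral01_eq_integral:
  assumes "f integrable_on {0..1}"
  shows "mat_integral01 f = integral {0..1} f"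
proof -
  have "((\<lambda>a. f a $ i $ j) has_integral integral {0..1} f $ i $ j) {0..1}" for i j
    using has_integral_linear[OF has_integral_linear[OF integrable_integral[OF assms]
        bounded_linear_vec_nth] bounded_linear_vec_nth]
    by (simp add: o_def)
  then show ?thesis by (simp add: mat_integral01_def vec_eq_iff integral_unique)
qed

lemma has_integral_mat_integral01_mult_vec:
  assumes "f integrable_on {0..1}"
  shows "((\<lambda>a. f a *v x) has_integral (mat_integral01 f *v x)) {0..1}"
  using has_integral_linear[OF integrable_integral[OF assms] bounded_linear_mult_vec_left]
  by (simp add: mat_integral01_eq_integral[OF assms] o_def)

lemma mat_integral01_diff:
  assumes "f integrable_on {0..1}" and "g integrable_on {0..1}"
  shows "mat_integral01 f - mat_integral01 g = mat_integral01 (\<lambda>a. f a - g a)"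
  using assms by (simp add: mat_integral01_eq_integral integral_diff integrable_diff)

lemma spec_norm_mat_integral01_le:
  fixes f :: "real \<Rightarrow> real^'n^'m"
  assumes f: "f integrable_on {0..1}" and h: "(h has_integral I) {0..1}"
    and bound: "\<And>a. a \<in> {0..1} \<Longrightarrow> spec_norm (f a) \<le> h a"
  shows "spec_norm (mat_integral01 f) \<le> I"
  unfolding spec_norm_def
proof (rule onorm_le)
  fix x :: "real^'n"
  have "norm (mat_integral01 f *v x) = norm (integral {0..1} (\<lambda>a. f a *v x))"
    by (simp add: integral_unique[OF has_integral_mat_integral01_mult_vec[OF f]])
  also have "\<dots> \<le> integral {0..1} (\<lambda>a. h a * norm x)"
  proof (rule integral_norm_bound_integral)
    show "(\<lambda>a. f a *v x) integrable_on {0..1}"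
      using has_integral_mat_integral01_mult_vec[OF f] by blast
    show "(\<lambda>a. h a * norm x) integrable_on {0..1}"
      using h by (intro integrable_on_mult_left) blast
    show "norm (f a *v x) \<le> h a * norm x" if "a \<in> {0..1}" for a
      using norm_mult_vec_le_spec_norm[of "f a" x] bound[OF that]
      by (meson mult_right_mono norm_ge_zero order_trans)
  qed
  also have "\<dots> = I * norm x"
    using h by (simp add: integral_unique)
  finally show "norm (mat_integral01 f *v x) \<le> I * norm x" .
qed

lemma psd_mat_integral01:
  fixes f :: "real \<Rightarrow> real^'n^'n"
  assumes f: "f integrable_on {0..1}" and nonneg: "\<And>a x. a \<in> {0..1} \<Longrightarrow> 0 \<le> x \<bullet> (f a *v x)"
  shows "psd (mat_integral01 f + transpose (mat_integral01 f))"
  unfolding psd_add_transpose_iff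
proof
  fix x :: "real^'n"
  have "((\<lambda>a. x \<bullet> (f a *v x)) has_integral x \<bullet> (mat_integral01 f *v x)) {0..1}"
    using has_integral_linear[OF has_integral_mat_integral01_mult_vec[OF f] bounded_linear_inner_right]
    by (simp add: o_def)
  then show "0 \<le> x \<bullet> (mat_integral01 f *v x)"
    by (rule has_integral_nonneg) (rule nonneg)
qed

lemma has_integral_affine_01: "((\<lambda>a::real. c0 + c1 * (1 - a)) has_integral c0 + c1 / 2) {0..1}"
proof -
  have "((\<lambda>a::real. c0 + c1 * (1 - a)) has_integral
      (\<lambda>a. c0 * a + c1 * (a - a\<^sup>2 / 2)) 1 - (\<lambda>a. c0 * a + c1 * (a - a\<^sup>2 / 2)) 0) {0..1}"
    by (rule fundamental_theorem_of_calculus)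
      (auto intro!: derivative_eq_intros simp: power2_eq_square algebra_simps)
  then show ?thesis by simp
qed

definition segment_average :: "('a::real_normed_vector \<Rightarrow> real^'n^'m) \<Rightarrow> real \<Rightarrow> 'a \<Rightarrow> 'a \<Rightarrow> real^'n^'m"
  where "segment_average J c p q = mat_integral01 (\<lambda>a. J (p - ((1 - a) * c) *\<^sub>R q))"

lemma integrable_on_segment:
  fixes J :: "'a::real_normed_vector \<Rightarrow> 'b::banach"
  assumes "continuous_on UNIV J"
  shows "(\<lambda>a. J (p - ((1 - a) * c) *\<^sub>R q)) integrable_on {0..1}"
  by (intro integrable_continuous_interval continuous_on_compose2[OF assms] continuous_intros) auto

lemma psd_segment_average:
  fixes J :: "real^'n \<Rightarrow> real^'n^'n"
  assumes "continuous_on UNIV J" and "\<And>u x. 0 \<le> x \<bullet> (J u *v x)"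
  shows "psd (segment_average J c p q + transpose (segment_average J c p q))"
  unfolding segment_average_def using integrable_on_segment[OF assms(1)] assms(2)
  by (rule psd_mat_integral01)

lemma spec_norm_segment_average_le:
  fixes J :: "'a::real_normed_vector \<Rightarrow> real^'n^'m"
  assumes "continuous_on UNIV J" and "\<And>u. spec_norm (J u) \<le> L"
  shows "spec_norm (segment_average J c p q) \<le> L"
proof -
  have "((\<lambda>a::real. L) has_integral L) {0..1}"
    using has_integral_const_real[of L 0 1] by simp
  then show ?thesis
    unfolding segment_average_def
    by (rule spec_norm_mat_integral01_le[OF integrable_on_segment[OF assms(1)] _ assms(2)])
qed

lemma spec_norm_diff_segment_average_le:
  fixes J :: "'a::euclidean_space \<Rightarrow> real^'n^'m"
  assumes jlip: "\<And>x y. spec_norm (J x - J y) \<le> L * norm (x - y)" and "0 \<le> c"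
  shows "spec_norm (segment_average J c p q - segment_average J c p' q')
    \<le> L * norm (p - p') + c * L / 2 * norm (q - q')"
proof -
  have L: "0 \<le> L" using jlip by (rule spec_norm_lipschitz_const_nonneg)
  note integrable = integrable_on_segment[OF continuous_on_if_spec_norm_lipschitz[OF jlip]]
  have "spec_norm (J (p - ((1 - a) * c) *\<^sub>R q) - J (p' - ((1 - a) * c) *\<^sub>R q'))
      \<le> L * norm (p - p') + (c * L * norm (q - q')) * (1 - a)" if "a \<in> {0..1}" for a
  proof -
    have "norm ((p - ((1 - a) * c) *\<^sub>R q) - (p' - ((1 - a) * c) *\<^sub>R q'))
        = norm ((p - p') - ((1 - a) * c) *\<^sub>R (q - q'))"
      by (simp add: algebra_simps)
    also have "\<dots> \<le> norm (p - p') + norm (((1 - a) * c) *\<^sub>R (q - q'))"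
      by (rule norm_triangle_ineq4)
    also have "\<dots> = norm (p - p') + (1 - a) * c * norm (q - q')"
      using that \<open>0 \<le> c\<close> by simp
    finally have "L * norm ((p - ((1 - a) * c) *\<^sub>R q) - (p' - ((1 - a) * c) *\<^sub>R q'))
        \<le> L * (norm (p - p') + (1 - a) * c * norm (q - q'))"
      using L by (rule mult_left_mono)
    also have "\<dots> = L * norm (p - p') + (c * L * norm (q - q')) * (1 - a)"
      by (simp add: algebra_simps)
    finally show ?thesis
      by (rule order_trans[OF jlip])
  qed
  then have "spec_norm (mat_integral01 (\<lambda>a. J (p - ((1 - a) * c) *\<^sub>R q) - J (p' - ((1 - a) * c) *\<^sub>R q')))
      \<le> L * norm (p - p') + c * L * norm (q - q') / 2"
    by (rule spec_norm_mat_integral01_le[OF integrable_diff[OF integrable integrable] has_integral_affine_01])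
  moreover have "c * L * norm (q - q') / 2 = c * L / 2 * norm (q - q')"
    by simp
  ultimately show ?thesis
    by (simp only: segment_average_def mat_integral01_diff[OF integrable integrable])
qed

theorem lemma12:
  fixes F :: "real^'n \<Rightarrow> real^'n"
    and J :: "real^'n \<Rightarrow> real^'n^'n"
    and z :: "int \<Rightarrow> real^'n"
    and ell Lam \<eta> :: real
    and w :: "int \<Rightarrow> real^'n"
    and A B :: "int \<Rightarrow> real^'n^'n"
  assumes jac: "\<And>x. (F has_derivative (\<lambda>h. J x *v h)) (at x)"
    and mono: "\<And>x y. 0 \<le> (F y - F x) \<bullet> (y - x)"
    and lip: "\<And>x y. norm (F x - F y) \<le> ell * norm (x - y)"
    and jlip: "\<And>x y. spec_norm (J x - J y) \<le> Lam * norm (x - y)"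
    and eta: "\<eta> > 0"
    and rec: "\<And>t. t \<ge> 0 \<Longrightarrow> z (t + 1) = z t - (2 * \<eta>) *\<^sub>R F (z t) + \<eta> *\<^sub>R F (z (t - 1))"
    and w_def: "\<And>t. w t = z t + \<eta> *\<^sub>R F (z (t - 1))"
    and A_def: "\<And>t. A t = mat_integral01 (\<lambda>\<alpha>. J (w t - ((1 - \<alpha>) * \<eta>) *\<^sub>R F (z t)))"
    and B_def: "\<And>t. B t = mat_integral01 (\<lambda>\<alpha>. J (w t - ((1 - \<alpha>) * \<eta>) *\<^sub>R F (z (t - 1))))"
    and t: "t \<ge> 0"
  shows "psd (A t + transpose (A t)) \<and> psd (B t + transpose (B t))
    \<and> spec_norm (A t) \<le> ell \<and> spec_norm (B t) \<le> ell
    \<and> spec_norm (A t - B t) \<le> \<eta> * Lam / 2 * norm (F (z t) - F (z (t - 1)))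
    \<and> spec_norm (A t - A (t + 1)) \<le> Lam * norm (w t - w (t + 1)) + \<eta> * Lam / 2 * norm (F (z t) - F (z (t + 1)))
    \<and> spec_norm (B t - B (t + 1)) \<le> Lam * norm (w t - w (t + 1)) + \<eta> * Lam / 2 * norm (F (z (t - 1)) - F (z t))"
proof -
  have J_cont: "continuous_on UNIV J"
    using jlip by (rule continuous_on_if_spec_norm_lipschitz)
  have avg:
    "A t = segment_average J \<eta> (w t) (F (z t))"
    "B t = segment_average J \<eta> (w t) (F (z (t - 1)))"
    "A (t + 1) = segment_average J \<eta> (w (t + 1)) (F (z (t + 1)))"
    "B (t + 1) = segment_average J \<eta> (w (t + 1)) (F (z t))"
    by (simp_all add: A_def B_def segment_average_def)
  have psd: "psd (segment_average J \<eta> p q + transpose (segment_average J \<eta> p q))" for p q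
    using J_cont monotone_jacobian_quadratic_form_nonneg[OF jac mono] by (rule psd_segment_average)
  have bounded: "spec_norm (segment_average J \<eta> p q) \<le> ell" for p q
    using J_cont spec_norm_jacobian_le_lipschitz[OF jac lip] by (rule spec_norm_segment_average_le)
  note diff = spec_norm_diff_segment_average_le[OF jlip less_imp_le[OF eta]]
  show ?thesis
    unfolding avg
    using psd bounded
      diff[of "w t" "F (z t)" "w t" "F (z (t - 1))"]
      diff[of "w t" "F (z t)" "w (t + 1)" "F (z (t + 1))"]
      diff[of "w t" "F (z (t - 1))" "w (t + 1)" "F (z t)"]
    by simp
qed

end
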